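(* Let $E$ be a congruence on $\overline{\boldsymbol{T}(X_1,\ldots,X_n)}$. The following are equivalent: (1) if $(f,-\infty)\in E$, then $f=-\infty$; (2) $\overline{\boldsymbol{T}(X_1,\ldots,X_n)}/E$ is a semifield; (3) $E$ is a semifield.
   Context: $\boldsymbol{T}=\mathbb{R}\cup\{-\infty\}$ with $a\oplus b=\max\{a,b\}$, $a\odot b=a+b$. $\overline{\boldsymbol{T}[X_1,\ldots,X_n]}$ is the tropical polynomial semiring modulo identifying polynomials defining the same function $\boldsymbol{T}^n\to\boldsymbol{T}$; it is cancellative and $\overline{\boldsymbol{T}(X_1,\ldots,X_n)}$ is its semifield of fractions, with zero $-\infty$ and one $0$. A semifield is a commutative semiring with $0\neq1$ in which every nonzero element is multiplicatively invertible. A congruence is an equivalence relation $E\subset S\times S$ compatible with both operations; $E$ is a subsemiring of $S\times S$ (componentwise operations, zero $(-\infty,-\infty)$, one $(0,0)$), and "$E$ is a semifield" refers to this structure. *)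

theory Defs
  imports "HOL-Algebra.Ring" "HOL-Library.Extended_Real"
begin

definition semifield :: "('a, 'b) ring_scheme \<Rightarrow> bool" where
  "semifield R \<longleftrightarrow> semiring R \<and> comm_monoid R \<and> \<one>\<^bsub>R\<^esub> \<noteq> \<zero>\<^bsub>R\<^esub>
      \<and> (\<forall>x \<in> carrier R - {\<zero>\<^bsub>R\<^esub>}. x \<in> Units R)"

definition semiring_congruence :: "('a, 'b) ring_scheme \<Rightarrow> ('a \<times> 'a) set \<Rightarrow> bool" where
  "semiring_congruence R E \<longleftrightarrow> E \<subseteq> carrier R \<times> carrier R \<and> equiv (carrier R) E
     \<and> (\<forall>a b c d. (a, b) \<in> E \<longrightarrow> (c, d) \<in> E \<longrightarrow>
          (a \<oplus>\<^bsub>R\<^esub> c, b \<oplus>\<^bsub>R\<^esub> d) \<in> E \<and> (a \<otimes>\<^bsub>R\<^esub> c, b \<otimes>\<^bsub>R\<^esub> d) \<in> E)"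

definition quot_semiring :: "('a, 'b) ring_scheme \<Rightarrow> ('a \<times> 'a) set \<Rightarrow> 'a set ring" where
  "quot_semiring R E = \<lparr> carrier = carrier R // E,
      mult = (\<lambda>A B. E `` {(SOME a. a \<in> A) \<otimes>\<^bsub>R\<^esub> (SOME b. b \<in> B)}),
      one = E `` {\<one>\<^bsub>R\<^esub>},
      zero = E `` {\<zero>\<^bsub>R\<^esub>},
      add = (\<lambda>A B. E `` {(SOME a. a \<in> A) \<oplus>\<^bsub>R\<^esub> (SOME b. b \<in> B)}) \<rparr>"

text \<open>A congruence E viewed as a subsemiring of S \<times> S (componentwise operations).\<close>
definition pair_semiring :: "('a, 'b) ring_scheme \<Rightarrow> ('a \<times> 'a) set \<Rightarrow> ('a \<times> 'a) ring" where
  "pair_semiring R E = \<lparr> carrier = E,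
      mult = (\<lambda>p q. (fst p \<otimes>\<^bsub>R\<^esub> fst q, snd p \<otimes>\<^bsub>R\<^esub> snd q)),
      one = (\<one>\<^bsub>R\<^esub>, \<one>\<^bsub>R\<^esub>),
      zero = (\<zero>\<^bsub>R\<^esub>, \<zero>\<^bsub>R\<^esub>),
      add = (\<lambda>p q. (fst p \<oplus>\<^bsub>R\<^esub> fst q, snd p \<oplus>\<^bsub>R\<^esub> snd q)) \<rparr>"

text \<open>Tropical numbers T = R \<union> {-\<infinity>} are modelled inside ereal (+\<infinity> never occurs);
  max is tropical addition and + is tropical multiplication.
  A nonzero tropical polynomial is a nonempty finite set of terms c \<odot> X^a (c real,
  a : 'n \<Rightarrow> nat); its function on real points x is max_{(c,a)} (c + \<Sum>_i a_i x_i).\<close>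
definition trop_poly_funs :: "(('n::finite \<Rightarrow> real) \<Rightarrow> real) set" where
  "trop_poly_funs = {p. \<exists>T :: (real \<times> ('n \<Rightarrow> nat)) set. finite T \<and> T \<noteq> {} \<and>
      p = (\<lambda>x. Max ((\<lambda>(c, a). c + (\<Sum>i\<in>UNIV. real (a i) * x i)) ` T))}"

text \<open>Elements of the semifield of fractions of the semiring of tropical polynomial functions:
  the zero (-\<infinity>) and the fractions p \<oslash> q of nonzero polynomials, represented by their
  (faithful) function x \<mapsto> p(x) - q(x) on R^n.\<close>
definition trop_rat_funs :: "(('n::finite \<Rightarrow> real) \<Rightarrow> ereal) set" where
  "trop_rat_funs = {\<lambda>x. -\<infinity>} \<union>
     {f. \<exists>p \<in> trop_poly_funs. \<exists>q \<in> trop_poly_funs. f = (\<lambda>x. ereal (p x - q x))}"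

definition TRF :: "(('n::finite \<Rightarrow> real) \<Rightarrow> ereal) ring" where
  "TRF = \<lparr> carrier = trop_rat_funs,
      mult = (\<lambda>f g x. f x + g x),
      one = (\<lambda>x. 0),
      zero = (\<lambda>x. -\<infinity>),
      add = (\<lambda>f g x. max (f x) (g x)) \<rparr>"

end

theory Submission
  imports Defs
begin

(* If (f, 0) is in E for some f <> 0, multiplying
   by f^-1 gives (1, 0) in E; so condition (1) just says that 1 and 0 are not congruent.
   In that case every class other than that of 0 is the class of a unit, whose inverse
   class inverts it, so S/E is a semifield; and for (f, g) in E with f, g <> 0, multiplying
   by f^-1 g^-1 gives (g^-1, f^-1) in E, so (f^-1, g^-1) is an inverse of (f, g) inside E.
   Conversely, in S/E the class of 1 must differ from that of 0, and in E a pair (f, 0)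
   can never be invertible since its second component annihilates everything.
   The only input specific to tropical rational functions is that they form a semifield
   (tropical zero 0 = -infinity, tropical one 1 = 0). *)

locale semiring_with_congruence = semiring R for R (structure) +
  fixes E :: "('a \<times> 'a) set"
  assumes congruence: "semiring_congruence R E"
begin

lemma cong_equiv: "equiv (carrier R) E"
  using congruence by (simp add: semiring_congruence_def)

lemma cong_subset: "E \<subseteq> carrier R \<times> carrier R"
  using congruence by (simp add: semiring_congruence_def)

lemma cong_fst_closed [simp]: "(a, b) \<in> E \<Longrightarrow> a \<in> carrier R"
  and cong_snd_closed [simp]: "(a, b) \<in> E \<Longrightarrow> b \<in> carrier R"
  using cong_subset by auto

lemma cong_refl: "a \<in> carrier R \<Longrightarrow> (a, a) \<in> E"
  using cong_equiv by (auto simp: equiv_def dest: refl_onD)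

lemma cong_sym: "(a, b) \<in> E \<Longrightarrow> (b, a) \<in> E"
  using cong_equiv by (auto simp: equiv_def dest: symD)

lemma cong_add: "(a, b) \<in> E \<Longrightarrow> (c, d) \<in> E \<Longrightarrow> (a \<oplus> c, b \<oplus> d) \<in> E"
  and cong_mult: "(a, b) \<in> E \<Longrightarrow> (c, d) \<in> E \<Longrightarrow> (a \<otimes> c, b \<otimes> d) \<in> E"
  using congruence by (simp_all add: semiring_congruence_def)

lemma class_eq_iff: "a \<in> carrier R \<Longrightarrow> b \<in> carrier R \<Longrightarrow> E `` {a} = E `` {b} \<longleftrightarrow> (a, b) \<in> E"
  using eq_equiv_class_iff[OF cong_equiv] by blast

lemma some_in_class: "a \<in> carrier R \<Longrightarrow> (a, SOME x. x \<in> E `` {a}) \<in> E"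
  using someI[of "\<lambda>x. x \<in> E `` {a}" a] cong_refl by simp

lemma quot_semiring_simps [simp]:
  "carrier (quot_semiring R E) = carrier R // E"
  "\<one>\<^bsub>quot_semiring R E\<^esub> = E `` {\<one>}"
  "\<zero>\<^bsub>quot_semiring R E\<^esub> = E `` {\<zero>}"
  by (simp_all add: quot_semiring_def)

lemma quot_semiring_mult_class [simp]:
  assumes "a \<in> carrier R" "b \<in> carrier R"
  shows "E `` {a} \<otimes>\<^bsub>quot_semiring R E\<^esub> E `` {b} = E `` {a \<otimes> b}"
proof -
  have "(a \<otimes> b, (SOME x. x \<in> E `` {a}) \<otimes> (SOME x. x \<in> E `` {b})) \<in> E"
    using assms by (intro cong_mult some_in_class)
  then show ?thesis
    by (simp add: quot_semiring_def equiv_class_eq[OF cong_equiv])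
qed

lemma quot_semiring_add_class [simp]:
  assumes "a \<in> carrier R" "b \<in> carrier R"
  shows "E `` {a} \<oplus>\<^bsub>quot_semiring R E\<^esub> E `` {b} = E `` {a \<oplus> b}"
proof -
  have "(a \<oplus> b, (SOME x. x \<in> E `` {a}) \<oplus> (SOME x. x \<in> E `` {b})) \<in> E"
    using assms by (intro cong_add some_in_class)
  then show ?thesis
    by (simp add: quot_semiring_def equiv_class_eq[OF cong_equiv])
qed

lemma semiring_quot_semiring: "semiring (quot_semiring R E)"
proof -
  have "abelian_monoid (quot_semiring R E)"
    by (rule abelian_monoidI) (auto elim!: quotientE simp: quotientI a_ac)
  moreover have "monoid (quot_semiring R E)"
    by (rule monoidI) (auto elim!: quotientE simp: quotientI m_assoc)
  ultimately show ?thesis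
    by (rule semiring.intro) (unfold_locales, auto elim!: quotientE simp: l_distr r_distr)
qed

lemma comm_monoid_quot_semiring:
  assumes "comm_monoid R"
  shows "comm_monoid (quot_semiring R E)"
proof -
  interpret comm_monoid R by fact
  show ?thesis
    by (rule comm_monoidI) (auto elim!: quotientE simp: quotientI m_ac)
qed

lemma pair_semiring_simps [simp]:
  "carrier (pair_semiring R E) = E"
  "\<one>\<^bsub>pair_semiring R E\<^esub> = (\<one>, \<one>)"
  "\<zero>\<^bsub>pair_semiring R E\<^esub> = (\<zero>, \<zero>)"
  "p \<otimes>\<^bsub>pair_semiring R E\<^esub> q = (fst p \<otimes> fst q, snd p \<otimes> snd q)"
  "p \<oplus>\<^bsub>pair_semiring R E\<^esub> q = (fst p \<oplus> fst q, snd p \<oplus> snd q)"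
  by (simp_all add: pair_semiring_def)

lemma semiring_pair_semiring: "semiring (pair_semiring R E)"
proof -
  have "abelian_monoid (pair_semiring R E)"
    by (rule abelian_monoidI) (auto intro: cong_add cong_refl simp: a_ac)
  moreover have "monoid (pair_semiring R E)"
    by (rule monoidI) (auto intro: cong_mult cong_refl simp: m_assoc)
  ultimately show ?thesis
    by (rule semiring.intro) (unfold_locales, auto simp: l_distr r_distr)
qed

lemma comm_monoid_pair_semiring:
  assumes "comm_monoid R"
  shows "comm_monoid (pair_semiring R E)"
proof -
  interpret comm_monoid R by fact
  show ?thesis
    by (rule comm_monoidI) (auto intro: cong_mult cong_refl simp: m_ac)
qed

context
  assumes semifield: "semifield R"
begin

interpretation comm_monoid R
  using semifield by (simp add: semifield_def)

lemma semifield_one_neq_zero: "\<one> \<noteq> \<zero>"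
  using semifield by (simp add: semifield_def)

lemma semifield_Units: "x \<in> carrier R \<Longrightarrow> x \<noteq> \<zero> \<Longrightarrow> x \<in> Units R"
  using semifield by (simp add: semifield_def)

lemma zero_class_trivial_iff_one_not_cong_zero:
  "(\<forall>f. (f, \<zero>) \<in> E \<longrightarrow> f = \<zero>) \<longleftrightarrow> (\<one>, \<zero>) \<notin> E"
proof
  assume "\<forall>f. (f, \<zero>) \<in> E \<longrightarrow> f = \<zero>"
  then show "(\<one>, \<zero>) \<notin> E"
    using semifield_one_neq_zero by blast
next
  assume one_not_zero: "(\<one>, \<zero>) \<notin> E"
  show "\<forall>f. (f, \<zero>) \<in> E \<longrightarrow> f = \<zero>"
  proof (intro allI impI, rule ccontr)
    fix f
    assume f: "(f, \<zero>) \<in> E" "f \<noteq> \<zero>"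
    then have unit: "f \<in> Units R"
      by (simp add: semifield_Units)
    with f have "(f \<otimes> inv f, \<zero> \<otimes> inv f) \<in> E"
      by (intro cong_mult cong_refl) auto
    with unit have "(\<one>, \<zero>) \<in> E"
      by simp
    with one_not_zero show False ..
  qed
qed

lemma semifield_quot_semiring_iff: "semifield (quot_semiring R E) \<longleftrightarrow> (\<one>, \<zero>) \<notin> E"
proof -
  have "X \<in> Units (quot_semiring R E)" if X: "X \<in> carrier R // E" "X \<noteq> E `` {\<zero>}" for X
  proof -
    obtain a where a: "X = E `` {a}" "a \<in> carrier R"
      using X(1) by (rule quotientE)
    with X(2) have "a \<in> Units R"
      by (auto intro: semifield_Units)
    then have "E `` {inv a} \<otimes>\<^bsub>quot_semiring R E\<^esub> X = E `` {\<one>}"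
      "X \<otimes>\<^bsub>quot_semiring R E\<^esub> E `` {inv a} = E `` {\<one>}"
      using a by simp_all
    with X(1) \<open>a \<in> Units R\<close> show ?thesis
      by (auto simp: Units_def[of "quot_semiring R E"]
          intro!: bexI[of _ "E `` {inv a}"] quotientI)
  qed
  moreover have "E `` {\<one>} = E `` {\<zero>} \<longleftrightarrow> (\<one>, \<zero>) \<in> E"
    by (simp add: class_eq_iff)
  ultimately show ?thesis
    using semiring_quot_semiring comm_monoid_quot_semiring[OF comm_monoid_axioms]
    by (auto simp: semifield_def)
qed

lemma semifield_pair_semiring_iff:
  "semifield (pair_semiring R E) \<longleftrightarrow> (\<forall>f. (f, \<zero>) \<in> E \<longrightarrow> f = \<zero>)"
proof
  assume pair_semifield: "semifield (pair_semiring R E)"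
  show "\<forall>f. (f, \<zero>) \<in> E \<longrightarrow> f = \<zero>"
  proof (intro allI impI, rule ccontr)
    fix f
    assume "(f, \<zero>) \<in> E" "f \<noteq> \<zero>"
    with pair_semifield have "(f, \<zero>) \<in> Units (pair_semiring R E)"
      by (simp add: semifield_def)
    then obtain g h where "(g, h) \<in> E" "h \<otimes> \<zero> = \<one>"
      by (auto simp: Units_def)
    then show False
      using semifield_one_neq_zero by simp
  qed
next
  assume zero_class: "\<forall>f. (f, \<zero>) \<in> E \<longrightarrow> f = \<zero>"
  have "(f, g) \<in> Units (pair_semiring R E)" if fg: "(f, g) \<in> E" "(f, g) \<noteq> (\<zero>, \<zero>)" for f g
  proof -
    have "g \<noteq> \<zero>"
      using zero_class fg by auto
    moreover have "f \<noteq> \<zero>"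
      using zero_class cong_sym[OF fg(1)] \<open>g \<noteq> \<zero>\<close> by auto
    ultimately have units: "f \<in> Units R" "g \<in> Units R"
      using fg by (auto intro: semifield_Units)
    with fg have "(f \<otimes> (inv f \<otimes> inv g), g \<otimes> (inv f \<otimes> inv g)) \<in> E"
      by (intro cong_mult cong_refl) auto
    moreover have "f \<otimes> (inv f \<otimes> inv g) = inv g"
      using units by (simp add: Units_closed m_assoc[symmetric])
    moreover have "g \<otimes> (inv f \<otimes> inv g) = inv f"
      using units by (simp add: Units_closed m_lcomm[of g])
    ultimately have "(inv f, inv g) \<in> E"
      by (simp add: cong_sym)
    with fg units show ?thesis
      by (auto simp: Units_def[of "pair_semiring R E"] intro!: bexI[of _ "(inv f, inv g)"])
  qed
  then show "semifield (pair_semiring R E)"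
    using semiring_pair_semiring comm_monoid_pair_semiring semifield_one_neq_zero
    by (auto simp: semifield_def comm_monoid_axioms)
qed

end

end

lemma Max_add_Max:
  fixes f g :: "_ \<Rightarrow> 'a::{linorder, ordered_ab_semigroup_add}"
  assumes "finite A" "A \<noteq> {}" "finite B" "B \<noteq> {}"
  shows "Max (f ` A) + Max (g ` B) = Max ((\<lambda>(u, v). f u + g v) ` (A \<times> B))"
proof (rule Max_eqI[symmetric])
  show "finite ((\<lambda>(u, v). f u + g v) ` (A \<times> B))"
    using assms by simp
next
  fix y
  assume "y \<in> (\<lambda>(u, v). f u + g v) ` (A \<times> B)"
  then obtain u v where "u \<in> A" "v \<in> B" "y = f u + g v"
    by auto
  with assms show "y \<le> Max (f ` A) + Max (g ` B)"
    by (simp add: add_mono)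
next
  have "Max (f ` A) \<in> f ` A" "Max (g ` B) \<in> g ` B"
    using assms by simp_all
  then show "Max (f ` A) + Max (g ` B) \<in> (\<lambda>(u, v). f u + g v) ` (A \<times> B)"
    by auto
qed

lemma max_add_distrib_mono:
  fixes a b c :: "'a::{linorder, ordered_ab_semigroup_add}"
  shows "max a b + c = max (a + c) (b + c)" "c + max a b = max (c + a) (c + b)"
  using max_of_mono[of "\<lambda>u. u + c"] max_of_mono[of "\<lambda>u. c + u"]
  by (simp_all add: mono_def add_left_mono add_right_mono)

definition trop_monomial :: "real \<times> ('n::finite \<Rightarrow> nat) \<Rightarrow> ('n \<Rightarrow> real) \<Rightarrow> real" where
  "trop_monomial t x = fst t + (\<Sum>i\<in>UNIV. real (snd t i) * x i)"

lemma trop_monomial_mult: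
  "trop_monomial (c + d, \<lambda>i. a i + b i) x = trop_monomial (c, a) x + trop_monomial (d, b) x"
  by (simp add: trop_monomial_def sum.distrib algebra_simps)

lemma trop_poly_funs_iff:
  "p \<in> trop_poly_funs \<longleftrightarrow>
     (\<exists>T. finite T \<and> T \<noteq> {} \<and> p = (\<lambda>x. Max ((\<lambda>t. trop_monomial t x) ` T)))"
  by (simp add: trop_poly_funs_def trop_monomial_def case_prod_beta')

lemma trop_poly_funs_zero: "(\<lambda>x. 0) \<in> trop_poly_funs"
  unfolding trop_poly_funs_iff
  by (rule exI[of _ "{(0, \<lambda>i. 0)}"]) (simp add: trop_monomial_def)

lemma trop_poly_funs_add:
  assumes "p \<in> trop_poly_funs" "q \<in> trop_poly_funs"
  shows "(\<lambda>x. p x + q x) \<in> trop_poly_funs"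
proof -
  obtain S T where S: "finite S" "S \<noteq> {}" "p = (\<lambda>x. Max ((\<lambda>t. trop_monomial t x) ` S))"
    and T: "finite T" "T \<noteq> {}" "q = (\<lambda>x. Max ((\<lambda>t. trop_monomial t x) ` T))"
    using assms unfolding trop_poly_funs_iff by blast
  define products where
    "products = (\<lambda>((c, a), (d, b)). (c + d, \<lambda>i. a i + b i)) ` (S \<times> T)"
  have "p x + q x = Max ((\<lambda>t. trop_monomial t x) ` products)" for x
  proof -
    have "p x + q x = Max ((\<lambda>(s, t). trop_monomial s x + trop_monomial t x) ` (S \<times> T))"
      using S T by (simp add: Max_add_Max)
    also have "\<dots> = Max ((\<lambda>t. trop_monomial t x) ` products)"
      unfolding products_def image_image
      by (rule arg_cong[where f = Max], rule image_cong) (auto simp: trop_monomial_mult)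
    finally show ?thesis .
  qed
  moreover have "finite products" "products \<noteq> {}"
    using S T by (simp_all add: products_def)
  ultimately show ?thesis
    unfolding trop_poly_funs_iff by blast
qed

lemma trop_poly_funs_max:
  assumes "p \<in> trop_poly_funs" "q \<in> trop_poly_funs"
  shows "(\<lambda>x. max (p x) (q x)) \<in> trop_poly_funs"
proof -
  obtain S T where S: "finite S" "S \<noteq> {}" "p = (\<lambda>x. Max ((\<lambda>t. trop_monomial t x) ` S))"
    and T: "finite T" "T \<noteq> {}" "q = (\<lambda>x. Max ((\<lambda>t. trop_monomial t x) ` T))"
    using assms unfolding trop_poly_funs_iff by blast
  then have "(\<lambda>x. max (p x) (q x)) = (\<lambda>x. Max ((\<lambda>t. trop_monomial t x) ` (S \<union> T)))"
    by (simp add: image_Un Max_Un)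
  with S T show ?thesis
    unfolding trop_poly_funs_iff by blast
qed

lemma trop_rat_funsE:
  assumes "f \<in> trop_rat_funs"
  obtains "f = (\<lambda>x. -\<infinity>)"
  | p q where "p \<in> trop_poly_funs" "q \<in> trop_poly_funs" "f = (\<lambda>x. ereal (p x - q x))"
  using assms unfolding trop_rat_funs_def by blast

lemma trop_rat_funs_bot: "(\<lambda>x. -\<infinity>) \<in> trop_rat_funs"
  by (simp add: trop_rat_funs_def)

lemma trop_rat_funs_fraction:
  "p \<in> trop_poly_funs \<Longrightarrow> q \<in> trop_poly_funs \<Longrightarrow> (\<lambda>x. ereal (p x - q x)) \<in> trop_rat_funs"
  unfolding trop_rat_funs_def by blast

lemma trop_rat_funs_zero: "(\<lambda>x. 0) \<in> trop_rat_funs"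
  using trop_rat_funs_fraction[OF trop_poly_funs_zero trop_poly_funs_zero]
  by (simp add: zero_ereal_def)

lemma trop_rat_funs_neq_PInf: "f \<in> trop_rat_funs \<Longrightarrow> f x \<noteq> \<infinity>"
  by (auto elim: trop_rat_funsE)

lemma trop_rat_funs_add:
  assumes f: "f \<in> trop_rat_funs" and g: "g \<in> trop_rat_funs"
  shows "(\<lambda>x. f x + g x) \<in> trop_rat_funs"
proof (cases "f = (\<lambda>x. -\<infinity>) \<or> g = (\<lambda>x. -\<infinity>)")
  case True
  then have "(\<lambda>x. f x + g x) = (\<lambda>x. -\<infinity>)"
    using trop_rat_funs_neq_PInf[OF f] trop_rat_funs_neq_PInf[OF g] by auto
  then show ?thesis
    by (simp add: trop_rat_funs_bot)
next
  case False
  then obtain p q p' q' where "p \<in> trop_poly_funs" "q \<in> trop_poly_funs"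
    "p' \<in> trop_poly_funs" "q' \<in> trop_poly_funs"
    "f = (\<lambda>x. ereal (p x - q x))" "g = (\<lambda>x. ereal (p' x - q' x))"
    using f g by (elim trop_rat_funsE) auto
  then show ?thesis
    using trop_rat_funs_fraction[of "\<lambda>x. p x + p' x" "\<lambda>x. q x + q' x"]
    by (simp add: trop_poly_funs_add algebra_simps)
qed

lemma trop_rat_funs_max:
  assumes f: "f \<in> trop_rat_funs" and g: "g \<in> trop_rat_funs"
  shows "(\<lambda>x. max (f x) (g x)) \<in> trop_rat_funs"
proof (cases "f = (\<lambda>x. -\<infinity>) \<or> g = (\<lambda>x. -\<infinity>)")
  case True
  with f g show ?thesis
    by auto
next
  case False
  then obtain p q p' q' where "p \<in> trop_poly_funs" "q \<in> trop_poly_funs"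
    "p' \<in> trop_poly_funs" "q' \<in> trop_poly_funs"
    "f = (\<lambda>x. ereal (p x - q x))" "g = (\<lambda>x. ereal (p' x - q' x))"
    using f g by (elim trop_rat_funsE) auto
  moreover have "max (ereal (a - b)) (ereal (a' - b')) = ereal (max (a + b') (a' + b) - (b + b'))"
    for a b a' b' :: real
    by (simp add: max_def)
  ultimately show ?thesis
    using trop_rat_funs_fraction[of "\<lambda>x. max (p x + q' x) (p' x + q x)" "\<lambda>x. q x + q' x"]
    by (simp add: trop_poly_funs_add trop_poly_funs_max)
qed

lemma TRF_simps [simp]:
  "carrier TRF = trop_rat_funs"
  "\<one>\<^bsub>TRF\<^esub> = (\<lambda>x. 0)"
  "\<zero>\<^bsub>TRF\<^esub> = (\<lambda>x. -\<infinity>)"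
  "f \<otimes>\<^bsub>TRF\<^esub> g = (\<lambda>x. f x + g x)"
  "f \<oplus>\<^bsub>TRF\<^esub> g = (\<lambda>x. max (f x) (g x))"
  by (simp_all add: TRF_def)

lemma semiring_TRF: "semiring (TRF :: (('n::finite \<Rightarrow> real) \<Rightarrow> ereal) ring)"
proof -
  have "abelian_monoid (TRF :: (('n \<Rightarrow> real) \<Rightarrow> ereal) ring)"
    by (rule abelian_monoidI)
      (auto simp: trop_rat_funs_max trop_rat_funs_bot max.assoc max.commute max.left_commute)
  moreover have "monoid (TRF :: (('n \<Rightarrow> real) \<Rightarrow> ereal) ring)"
    by (rule monoidI) (auto simp: trop_rat_funs_add trop_rat_funs_zero add.assoc)
  ultimately show ?thesis
    by (rule semiring.intro) (unfold_locales,
        auto simp: max_add_distrib_mono trop_rat_funs_neq_PInf)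
qed

lemma semifield_TRF: "semifield (TRF :: (('n::finite \<Rightarrow> real) \<Rightarrow> ereal) ring)"
  unfolding semifield_def
proof (intro conjI ballI semiring_TRF)
  show "comm_monoid (TRF :: (('n \<Rightarrow> real) \<Rightarrow> ereal) ring)"
    by (rule comm_monoidI) (auto simp: trop_rat_funs_add trop_rat_funs_zero add_ac)
  show "\<one>\<^bsub>TRF\<^esub> \<noteq> \<zero>\<^bsub>TRF :: (('n \<Rightarrow> real) \<Rightarrow> ereal) ring\<^esub>"
    by (simp add: fun_eq_iff)
next
  fix f :: "('n \<Rightarrow> real) \<Rightarrow> ereal"
  assume "f \<in> carrier TRF - {\<zero>\<^bsub>TRF\<^esub>}"
  then obtain p q where "p \<in> trop_poly_funs" "q \<in> trop_poly_funs" "f = (\<lambda>x. ereal (p x - q x))"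
    by (auto elim: trop_rat_funsE)
  then show "f \<in> Units TRF"
    by (auto simp: Units_def trop_rat_funs_fraction zero_ereal_def
        intro!: bexI[of _ "\<lambda>x. ereal (q x - p x)"])
qed

theorem lemma3p4:
  fixes E :: "((('n::finite \<Rightarrow> real) \<Rightarrow> ereal) \<times> (('n \<Rightarrow> real) \<Rightarrow> ereal)) set"
  assumes "semiring_congruence TRF E"
  shows "((\<forall>f. (f, \<zero>\<^bsub>TRF\<^esub>) \<in> E \<longrightarrow> f = \<zero>\<^bsub>TRF\<^esub>) \<longleftrightarrow> semifield (quot_semiring TRF E))
       \<and> (semifield (quot_semiring TRF E) \<longleftrightarrow> semifield (pair_semiring TRF E))"
proof -
  interpret semiring_with_congruence TRF E
    using semiring_TRF assms
    by (simp add: semiring_with_congruence_def semiring_with_congruence_axioms_def)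
  show ?thesis
    using zero_class_trivial_iff_one_not_cong_zero[OF semifield_TRF]
      semifield_quot_semiring_iff[OF semifield_TRF] semifield_pair_semiring_iff[OF semifield_TRF]
    by blast
qed

end
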